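(* Let $\mathcal A=(\Sigma,Q_\mathcal A,I_\mathcal A,F_\mathcal A,\delta_\mathcal A)$ and $\mathcal B=(\Sigma,Q_\mathcal B,I_\mathcal B,F_\mathcal B,\delta_\mathcal B)$ be NBA and $P=P_{\mathcal A,\mathcal B}(\subseteq^{\mathrm{bw}},\subseteq^{\mathrm f})$. Then $\mathcal L(\mathcal A)\subseteq\mathcal L(\mathcal B)$ if and only if $\mathcal L(\mathrm{Prune}_\mathcal B(\mathcal A,P))\subseteq\mathcal L(\mathcal B)$.
   Context: NBA are forward and backward complete; initial traces start in initial states, fair traces are infinite and visit accepting states infinitely often; the language is the set of infinite words with an initial fair trace. The relations below are on states of the disjoint union of $\mathcal A$ and $\mathcal B$, restricted to $Q_\mathcal A\times Q_\mathcal B$. Backward finite trace inclusion: $p\subseteq^{\mathrm{bw}}q$ iff for every finite word $w$, if there is a finite $w$-trace from an initial state ending in $p$, then there is one from an initial state ending in $q$. Fair trace inclusion: $p\subseteq^{\mathrm f}q$ iff for every infinite word $w$ and infinite $w$-trace from $p$ there is an infinite $w$-trace from $q$ that is fair whenever the former is fair. For $R_b,R_f\subseteq Q_\mathcal A\times Q_\mathcal B$, $P_{\mathcal A,\mathcal B}(R_b,R_f)=\{((p,\sigma,r),(p',\sigma,r'))\in\delta_\mathcal A\times\delta_\mathcal B: p\,R_b\,p',\ r\,R_f\,r'\}$. For $P\subseteq\delta_\mathcal A\times\delta_\mathcal B$, $\mathrm{Prune}_\mathcal B(\mathcal A,P)=(\Sigma,Q_\mathcal A,I_\mathcal A,F_\mathcal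 A,\delta')$ with $\delta'=\{t\in\delta_\mathcal A:\nexists t'\in\delta_\mathcal B,\ (t,t')\in P\}$. *)

theory Defs
  imports Main
begin

record ('s, 'a) nba =
  alphabet :: "'a set"
  states :: "'s set"
  initial :: "'s set"
  accepting :: "'s set"
  trans :: "('s \<times> 'a \<times> 's) set"

definition wf_nba :: "('s, 'a) nba \<Rightarrow> bool" where
  "wf_nba A \<longleftrightarrow> initial A \<subseteq> states A \<and> accepting A \<subseteq> states A \<and>
     trans A \<subseteq> states A \<times> alphabet A \<times> states A"

definition forward_complete :: "('s, 'a) nba \<Rightarrow> bool" where
  "forward_complete A \<longleftrightarrow>
     (\<forall>q\<in>states A. \<forall>a\<in>alphabet A. \<exists>q'. (q, a, q') \<in> trans A)"

definition backward_complete :: "('s, 'a) nba \<Rightarrow> bool" where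
  "backward_complete A \<longleftrightarrow>
     (\<forall>q'\<in>states A. \<forall>a\<in>alphabet A. \<exists>q. (q, a, q') \<in> trans A)"

definition inf_trace :: "('s, 'a) nba \<Rightarrow> (nat \<Rightarrow> 'a) \<Rightarrow> (nat \<Rightarrow> 's) \<Rightarrow> bool" where
  "inf_trace A w r \<longleftrightarrow> (\<forall>i. (r i, w i, r (Suc i)) \<in> trans A)"

definition fair :: "('s, 'a) nba \<Rightarrow> (nat \<Rightarrow> 's) \<Rightarrow> bool" where
  "fair A r \<longleftrightarrow> (\<exists>\<^sub>\<infinity>i. r i \<in> accepting A)"

definition fin_trace :: "('s, 'a) nba \<Rightarrow> 'a list \<Rightarrow> (nat \<Rightarrow> 's) \<Rightarrow> bool" where
  "fin_trace A w r \<longleftrightarrow> (\<forall>i < length w. (r i, w ! i, r (Suc i)) \<in> trans A)"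

definition language :: "('s, 'a) nba \<Rightarrow> (nat \<Rightarrow> 'a) set" where
  "language A = {w. \<exists>r. inf_trace A w r \<and> r 0 \<in> initial A \<and> fair A r}"

definition bw_incl :: "('s, 'a) nba \<Rightarrow> ('t, 'a) nba \<Rightarrow> ('s \<times> 't) set" where
  "bw_incl A B = {(p, q). p \<in> states A \<and> q \<in> states B \<and>
     (\<forall>w. (\<exists>r. fin_trace A w r \<and> r 0 \<in> initial A \<and> r (length w) = p) \<longrightarrow>
          (\<exists>r'. fin_trace B w r' \<and> r' 0 \<in> initial B \<and> r' (length w) = q))}"

definition fair_incl :: "('s, 'a) nba \<Rightarrow> ('t, 'a) nba \<Rightarrow> ('s \<times> 't) set" where
  "fair_incl A B = {(p, q). p \<in> states A \<and> q \<in> states B \<and>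
     (\<forall>w r. inf_trace A w r \<and> r 0 = p \<longrightarrow>
        (\<exists>r'. inf_trace B w r' \<and> r' 0 = q \<and> (fair A r \<longrightarrow> fair B r')))}"

definition P_rel :: "('s, 'a) nba \<Rightarrow> ('t, 'a) nba \<Rightarrow> ('s \<times> 't) set \<Rightarrow> ('s \<times> 't) set
    \<Rightarrow> (('s \<times> 'a \<times> 's) \<times> ('t \<times> 'a \<times> 't)) set" where
  "P_rel A B Rb Rf = {((p, a, r), (p', a', r')).
      (p, a, r) \<in> trans A \<and> (p', a', r') \<in> trans B \<and> a = a' \<and> (p, p') \<in> Rb \<and> (r, r') \<in> Rf}"

definition prune :: "('t, 'a) nba \<Rightarrow> ('s, 'a) nba \<Rightarrow> (('s \<times> 'a \<times> 's) \<times> ('t \<times> 'a \<times> 't)) set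
    \<Rightarrow> ('s, 'a) nba" where
  "prune B A P = A\<lparr>trans := {t \<in> trans A. \<not> (\<exists>t' \<in> trans B. (t, t') \<in> P)}\<rparr>"

end

theory Submission
  imports Defs
begin

text \<open>Pruning only removes transitions, so one direction is trivial. Conversely, take an
  accepting run \<open>r\<close> of \<open>A\<close> on \<open>w\<close>. If it uses no pruned transition, it is an accepting run of the
  pruned automaton. Otherwise some step \<open>(r i, w i, r (i+1))\<close> is related to a \<open>B\<close>-transition
  \<open>(p', w i, q')\<close> with \<open>r i\<close> backward-included in \<open>p'\<close> and \<open>r (i+1)\<close> fair-included in \<open>q'\<close>:
  the first yields an initial \<open>B\<close>-run on the prefix ending in \<open>p'\<close>, the second a fair \<open>B\<close>-run on
  the suffix starting in \<open>q'\<close>, and gluing them along \<open>(p', w i, q')\<close> shows \<open>w \<in> language B\<close>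
  directly.\<close>

lemma language_prune_subset: "language (prune B A P) \<subseteq> language A"
  unfolding language_def inf_trace_def prune_def fair_def by auto

lemma fair_shift_iff: "fair A (\<lambda>j. r (j + k)) \<longleftrightarrow> fair A r"
  unfolding fair_def frequently_def cofinite_eq_sequentially
  by (simp add: eventually_sequentially_seg[where P = "\<lambda>j. r j \<notin> accepting A"])

lemma inf_trace_shift: "inf_trace A w r \<Longrightarrow> inf_trace A (\<lambda>j. w (j + k)) (\<lambda>j. r (j + k))"
  unfolding inf_trace_def by simp

lemma fin_trace_prefix: "inf_trace A w r \<Longrightarrow> fin_trace A (map w [0..<i]) r"
  unfolding fin_trace_def inf_trace_def by simp

lemma inf_trace_glue:
  assumes prefix: "fin_trace B (map w [0..<i]) r1"
    and step: "(r1 i, w i, r2 0) \<in> trans B"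
    and suffix: "inf_trace B (\<lambda>j. w (j + Suc i)) r2"
  shows "inf_trace B w (\<lambda>j. if j \<le> i then r1 j else r2 (j - Suc i))"
  unfolding inf_trace_def
proof
  fix j
  consider "j < i" | "j = i" | "i < j" by linarith
  then show "((if j \<le> i then r1 j else r2 (j - Suc i)), w j,
      (if Suc j \<le> i then r1 (Suc j) else r2 (Suc j - Suc i))) \<in> trans B"
  proof cases
    case 1
    then show ?thesis using prefix unfolding fin_trace_def by auto
  next
    case 2
    then show ?thesis using step by simp
  next
    case 3
    then have "(r2 (j - Suc i), w j, r2 (Suc (j - Suc i))) \<in> trans B"
      using suffix unfolding inf_trace_def by (metis Suc_leI le_add_diff_inverse2)
    with 3 show ?thesis by (simp add: Suc_diff_Suc)
  qed
qed

lemma fair_glue: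
  "fair B (\<lambda>j. if j \<le> i then r1 j else r2 (j - Suc i)) \<longleftrightarrow> fair B r2"
  using fair_shift_iff[of B "\<lambda>j. if j \<le> i then r1 j else r2 (j - Suc i)" "Suc i"] by simp

lemma language_of_run_with_pruned_step:
  assumes run: "inf_trace A w r" "r 0 \<in> initial A" "fair A r"
    and related: "((r i, w i, r (Suc i)), t') \<in> P_rel A B (bw_incl A B) (fair_incl A B)"
  shows "w \<in> language B"
proof -
  obtain p' q' where t': "t' = (p', w i, q')" and step: "(p', w i, q') \<in> trans B"
    and bw: "(r i, p') \<in> bw_incl A B" and fi: "(r (Suc i), q') \<in> fair_incl A B"
    using related unfolding P_rel_def by auto
  obtain r1 where r1: "fin_trace B (map w [0..<i]) r1" "r1 0 \<in> initial B" "r1 i = p'"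
    using bw fin_trace_prefix[OF run(1), of i] run(2) unfolding bw_incl_def by fastforce
  have "fair A (\<lambda>j. r (j + Suc i))"
    using run(3) fair_shift_iff by blast
  then obtain r2 where r2: "inf_trace B (\<lambda>j. w (j + Suc i)) r2" "r2 0 = q'" "fair B r2"
    using fi inf_trace_shift[OF run(1), of "Suc i"] unfolding fair_incl_def by fastforce
  have "inf_trace B w (\<lambda>j. if j \<le> i then r1 j else r2 (j - Suc i))"
    using inf_trace_glue[OF r1(1) _ r2(1)] r1(3) r2(2) step by simp
  moreover have "fair B (\<lambda>j. if j \<le> i then r1 j else r2 (j - Suc i))"
    using fair_glue r2(3) by blast
  ultimately show ?thesis
    using r1(2) unfolding language_def by fastforce
qed

lemma language_prune_of_run_without_pruned_step:
  assumes run: "inf_trace A w r" "r 0 \<in> initial A" "fair A r"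
    and unpruned: "\<forall>i. \<forall>t'\<in>trans B. ((r i, w i, r (Suc i)), t') \<notin> P"
  shows "w \<in> language (prune B A P)"
  using assms unfolding language_def inf_trace_def prune_def fair_def by auto

theorem theorem8p3:
  fixes A :: "('s, 'a) nba" and B :: "('t, 'a) nba"
  assumes "wf_nba A" and "wf_nba B"
    and "alphabet A = alphabet B"
    and "forward_complete A" and "backward_complete A"
    and "forward_complete B" and "backward_complete B"
  shows "language A \<subseteq> language B \<longleftrightarrow>
    language (prune B A (P_rel A B (bw_incl A B) (fair_incl A B))) \<subseteq> language B"
proof
  assume "language A \<subseteq> language B"
  then show "language (prune B A (P_rel A B (bw_incl A B) (fair_incl A B))) \<subseteq> language B"
    using language_prune_subset by blast
next
  let ?P = "P_rel A B (bw_incl A B) (fair_incl A B)"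
  assume pruned: "language (prune B A ?P) \<subseteq> language B"
  show "language A \<subseteq> language B"
  proof
    fix w assume "w \<in> language A"
    then obtain r where run: "inf_trace A w r" "r 0 \<in> initial A" "fair A r"
      unfolding language_def by blast
    show "w \<in> language B"
    proof (cases "\<exists>i. \<exists>t'\<in>trans B. ((r i, w i, r (Suc i)), t') \<in> ?P")
      case True
      then show ?thesis using language_of_run_with_pruned_step[OF run] by blast
    next
      case False
      then show ?thesis using language_prune_of_run_without_pruned_step[OF run] pruned by blast
    qed
  qed
qed

end
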